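(* Let $W$ be a real vector space and $w_1,w_2,w_3,w_4\in W$. For $t\in[0,1]$ put $w_1(t)=(1-t)w_1+tw_2$, $w_2(t)=(1-t)w_2+tw_3$, $w_3(t)=(1-t)w_3+tw_1$, $w_4(t)=w_4$. Then $\operatorname{rank}(w_i)_{i=1}^4\ge 2$ if and only if $\operatorname{rank}(w_i(t))_{i=1}^4\ge 2$ for all $0\le t\le 1$.
   Context: The rank of a finite sequence of vectors is the dimension of the linear subspace they span. *)

theory Defs
  imports "HOL-Analysis.Analysis"
begin

definition rank4 :: "'a::real_vector \<Rightarrow> 'a \<Rightarrow> 'a \<Rightarrow> 'a \<Rightarrow> nat" where
  "rank4 a b c d = dim (span {a, b, c, d})"

end

theory Submission
  imports Defs
begin

text \<open>The cyclic moves replace \<open>w\<^sub>1, w\<^sub>2, w\<^sub>3\<close> by \<open>s w\<^sub>1 + t w\<^sub>2, s w\<^sub>2 + t w\<^sub>3, s w\<^sub>3 + t w\<^sub>1\<close>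
  with \<open>s = 1 - t\<close>. This substitution is invertible whenever \<open>s\<^sup>3 + t\<^sup>3 \<noteq> 0\<close>, which holds for every
  real \<open>t\<close> since \<open>(1 - t)\<^sup>3 + t\<^sup>3 = 3 (t - 1/2)\<^sup>2 + 1/4\<close>. Hence the span, and with it the rank,
  does not depend on \<open>t\<close> at all.\<close>

lemma cyclic_combination_eq:
  fixes w1 w2 w3 :: "'a::real_vector" and s t :: real
  shows "(s^3 + t^3) *\<^sub>R w1 =
    s^2 *\<^sub>R (s *\<^sub>R w1 + t *\<^sub>R w2) - (s * t) *\<^sub>R (s *\<^sub>R w2 + t *\<^sub>R w3) + t^2 *\<^sub>R (s *\<^sub>R w3 + t *\<^sub>R w1)"
  by (simp add: power2_eq_square power3_eq_cube algebra_simps)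

lemma in_span_cyclic_combination:
  fixes w1 w2 w3 :: "'a::real_vector" and s t :: real
  assumes "s^3 + t^3 \<noteq> 0"
    and "s *\<^sub>R w1 + t *\<^sub>R w2 \<in> span S"
    and "s *\<^sub>R w2 + t *\<^sub>R w3 \<in> span S"
    and "s *\<^sub>R w3 + t *\<^sub>R w1 \<in> span S"
  shows "w1 \<in> span S"
proof -
  have "w1 = (1 / (s^3 + t^3)) *\<^sub>R ((s^3 + t^3) *\<^sub>R w1)"
    using assms(1) by simp
  also have "\<dots> \<in> span S"
    by (subst cyclic_combination_eq[of s t w1 w2 w3]) (intro span_scale span_add span_diff assms(2-4))
  finally show ?thesis .
qed

lemma span_cyclic_combination:
  fixes w1 w2 w3 :: "'a::real_vector" and s t :: real
  assumes "s^3 + t^3 \<noteq> 0"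
  shows "span (insert (s *\<^sub>R w1 + t *\<^sub>R w2) (insert (s *\<^sub>R w2 + t *\<^sub>R w3)
           (insert (s *\<^sub>R w3 + t *\<^sub>R w1) S))) = span (insert w1 (insert w2 (insert w3 S)))"
    (is "span ?T = span ?W")
proof -
  have a: "s *\<^sub>R w1 + t *\<^sub>R w2 \<in> span ?T"
    and b: "s *\<^sub>R w2 + t *\<^sub>R w3 \<in> span ?T"
    and c: "s *\<^sub>R w3 + t *\<^sub>R w1 \<in> span ?T"
    by (simp_all add: span_base)
  have "w1 \<in> span ?T" "w2 \<in> span ?T" "w3 \<in> span ?T"
    using in_span_cyclic_combination[OF assms a b c] in_span_cyclic_combination[OF assms b c a]
      in_span_cyclic_combination[OF assms c a b] .
  then have "?W \<subseteq> span ?T"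
    by (auto intro: span_base)
  moreover have "?T \<subseteq> span ?W"
    by (auto intro: span_add span_scale span_base)
  ultimately show ?thesis
    by (simp add: span_eq)
qed

lemma one_minus_cube_plus_cube_pos:
  fixes t :: real
  shows "(1 - t)^3 + t^3 > 0"
proof -
  have "(1 - t)^3 + t^3 = 3 * (t - 1/2)^2 + 1/4"
    by (simp add: power2_eq_square power3_eq_cube algebra_simps)
  then show ?thesis
    by (simp add: add_nonneg_pos)
qed

theorem lemma2p3:
  fixes w1 w2 w3 w4 :: "'a::real_vector"
  shows "rank4 w1 w2 w3 w4 \<ge> 2 \<longleftrightarrow>
    (\<forall>t::real. 0 \<le> t \<and> t \<le> 1 \<longrightarrow>
       rank4 ((1 - t) *\<^sub>R w1 + t *\<^sub>R w2) ((1 - t) *\<^sub>R w2 + t *\<^sub>R w3)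
             ((1 - t) *\<^sub>R w3 + t *\<^sub>R w1) w4 \<ge> 2)"
proof -
  have "(1 - t)^3 + t^3 \<noteq> 0" for t :: real
    using one_minus_cube_plus_cube_pos[of t] by linarith
  then have "rank4 ((1 - t) *\<^sub>R w1 + t *\<^sub>R w2) ((1 - t) *\<^sub>R w2 + t *\<^sub>R w3)
      ((1 - t) *\<^sub>R w3 + t *\<^sub>R w1) w4 = rank4 w1 w2 w3 w4" for t :: real
    unfolding rank4_def by (simp add: span_cyclic_combination)
  then show ?thesis
    by auto
qed

end
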